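(* Let $A(t)$, $t>1$, be a family of complex $2\times 2$ matrices with $\det(A(t))=1$ for all $t$, and suppose there are a real number $\alpha$ and a nonzero complex $2\times 2$ matrix $B$ such that $A(t)=t^\alpha B+o(t^\alpha)$ as $t\to\infty$ (i.e. $t^{-\alpha}A(t)\to B$). Then, as $t\to\infty$, $\tilde R_{(\log t)^{-1}}([A(t)]_{\mathbb{C}^*})$ converges in $PSL_2(\mathbb{C})$ to $[e^\alpha B+e^{-\alpha}(B^{\mathbf c})^*]_{\mathbb{C}^*}$.
   Context: For a complex $2\times 2$ matrix $B=\begin{pmatrix}a&b\\ c&d\end{pmatrix}$ write $B^{\mathbf c}=\begin{pmatrix}d&-b\\ -c&a\end{pmatrix}$ and let $B^*$ denote the conjugate transpose. $\mathbb{C}P^3$ is the projectivization of the space of complex $2\times 2$ matrices, $[B]_{\mathbb{C}^*}$ the class of a nonzero matrix, and $PSL_2(\mathbb{C})\subset\mathbb{C}P^3$ the set of classes with nonzero determinant. For $h>0$, the map $\tilde R_h\colon PSL_2(\mathbb{C})\to PSL_2(\mathbb{C})$ is defined as follows: choose a representative $A$ with $\det(A)=1$, write its polar decomposition $A=PU$ with $P$ positive definite Hermitian and $U$ unitary, and set $\tilde R_h([A]_{\mathbb{C}^*})=[P^hU]_{\mathbb{C}^*}$, where $P^h$ is the positive definite power of $P$. *)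

theory Defs
  imports "HOL-Analysis.Analysis"
begin

type_synonym cmat2 = "complex^2^2"

definition mat2 :: "complex \<Rightarrow> complex \<Rightarrow> complex \<Rightarrow> complex \<Rightarrow> cmat2" where
  "mat2 a b c d = (\<chi> i j. if i = 1 then (if j = 1 then a else b) else (if j = 1 then c else d))"

definition csmult :: "complex \<Rightarrow> cmat2 \<Rightarrow> cmat2" where
  "csmult c M = (\<chi> i j. c * M$i$j)"

definition adj :: "cmat2 \<Rightarrow> cmat2" where
  "adj M = (\<chi> i j. cnj (M$j$i))"

definition cofm :: "cmat2 \<Rightarrow> cmat2" where
  "cofm M = mat2 (M$2$2) (- (M$1$2)) (- (M$2$1)) (M$1$1)"

definition unitary2 :: "cmat2 \<Rightarrow> bool" where
  "unitary2 U \<longleftrightarrow> adj U ** U = mat 1"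

definition posdef2 :: "cmat2 \<Rightarrow> bool" where
  "posdef2 P \<longleftrightarrow> adj P = P \<and>
     (\<forall>x::complex^2. x \<noteq> 0 \<longrightarrow> 0 < Re (\<Sum>i\<in>UNIV. cnj (x$i) * (P *v x)$i))"

definition pdpow :: "cmat2 \<Rightarrow> real \<Rightarrow> cmat2" where
  "pdpow P h = (THE Q. \<exists>V l1 l2. unitary2 V \<and> 0 < l1 \<and> 0 < l2 \<and>
      P = V ** mat2 (of_real l1) 0 0 (of_real l2) ** adj V \<and>
      Q = V ** mat2 (of_real (l1 powr h)) 0 0 (of_real (l2 powr h)) ** adj V)"

definition polar_rep :: "real \<Rightarrow> cmat2 \<Rightarrow> cmat2" where
  "polar_rep h A = (SOME M. \<exists>P U. posdef2 P \<and> unitary2 U \<and> A = P ** U \<and> M = pdpow P h ** U)"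

definition pclass :: "cmat2 \<Rightarrow> cmat2 set" where
  "pclass M = {csmult c M | c. c \<noteq> 0}"

definition PSL2 :: "cmat2 set set" where
  "PSL2 = {pclass A | A. det A \<noteq> 0}"

definition Rtilde :: "real \<Rightarrow> cmat2 set \<Rightarrow> cmat2 set" where
  "Rtilde h X = pclass (polar_rep h (SOME A. det A = 1 \<and> X = pclass A))"

text \<open>Convergence in CP^3 (quotient topology of nonzero matrices modulo C^*):
  there are representatives converging to a nonzero representative of the limit.\<close>
definition proj_tendsto :: "('b \<Rightarrow> cmat2 set) \<Rightarrow> cmat2 set \<Rightarrow> 'b filter \<Rightarrow> bool" where
  "proj_tendsto X L F \<longleftrightarrow> (\<exists>f N. N \<noteq> 0 \<and> L = pclass N \<and>
      (\<forall>\<^sub>F t in F. f t \<in> X t) \<and> (f \<longlongrightarrow> N) F)"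

end

theory Submission
  imports Defs
begin

(*
  For det A = 1 the polar decomposition A = P U is explicit: with tau = sqrt (|A|^2 + 2),
  P = (A A^H + I) / tau and U = (A + adj (A^c)) / tau, since for a positive P of determinant one
  Cayley-Hamilton reads P^2 + I = tr(P) P and P^2 = A A^H.  The eigenvalues of P are l and 1/l with
  l + 1/l = tau, so P^h = a P + b I where a x + b interpolates x^h at l and 1/l, and therefore
  tau P^h U = tau a A + b (A + adj (A^c)) represents R_h [A].

  Writing A(t) = t^alpha N(t) with N(t) -> B, the determinant t^(-2 alpha) of N(t) converges, which
  forces alpha >= 0 and det B = 1 (alpha = 0) or det B = 0 (alpha > 0).  As l(t)^2 is comparable to
  |A(t)|^2 = t^(2 alpha) |N(t)|^2, one gets l(t)^(1/ln t) -> e^alpha, hence tau a -> e^alpha - e^(-alpha)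
  and b -> e^(-alpha) for h = 1/ln t.  After division by t^alpha the representatives converge to
  (e^alpha - e^(-alpha)) B + e^(-alpha) (B + adj (B^c)) = e^alpha B + e^(-alpha) adj (B^c), whose
  determinant |B|^2 + 2 or |B|^2 does not vanish.
*)

section \<open>Entrywise calculus of \<open>2 \<times> 2\<close> matrices\<close>

lemma mat2_nth [simp]:
  "mat2 a b c d $ 1 $ 1 = a" "mat2 a b c d $ 1 $ 2 = b"
  "mat2 a b c d $ 2 $ 1 = c" "mat2 a b c d $ 2 $ 2 = d"
  by (simp_all add: mat2_def)

lemma mat2_eta: "M = mat2 (M$1$1) (M$1$2) (M$2$1) (M$2$2)"
  unfolding mat2_def by (simp add: vec_eq_iff forall_2)

lemma mat2_cases: obtains a b c d where "M = mat2 a b c d"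
  using mat2_eta by blast

lemma mat2_eq_iff [simp]:
  "mat2 a b c d = mat2 a' b' c' d' \<longleftrightarrow> a = a' \<and> b = b' \<and> c = c' \<and> d = d'"
  by (metis mat2_nth)

lemma mat2_mult [simp]:
  "mat2 a b c d ** mat2 e f g k = mat2 (a*e + b*g) (a*f + b*k) (c*e + d*g) (c*f + d*k)"
  by (simp add: matrix_matrix_mult_def mat2_def vec_eq_iff forall_2 sum_2)

lemma mat2_add [simp]: "mat2 a b c d + mat2 e f g k = mat2 (a+e) (b+f) (c+g) (d+k)"
  by (simp add: mat2_def vec_eq_iff forall_2)

lemma mat2_mult_vec [simp]:
  "(mat2 a b c d *v x) $ 1 = a * x$1 + b * x$2"
  "(mat2 a b c d *v x) $ 2 = c * x$1 + d * x$2"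
  by (simp_all add: matrix_vector_mult_def sum_2)

lemma csmult_mat2 [simp]: "csmult z (mat2 a b c d) = mat2 (z*a) (z*b) (z*c) (z*d)"
  by (simp add: csmult_def mat2_def vec_eq_iff forall_2)

lemma adj_mat2 [simp]: "adj (mat2 a b c d) = mat2 (cnj a) (cnj c) (cnj b) (cnj d)"
  by (simp add: adj_def mat2_def vec_eq_iff forall_2)

lemma cofm_mat2 [simp]: "cofm (mat2 a b c d) = mat2 d (-b) (-c) a"
  by (simp add: cofm_def)

lemma det_mat2 [simp]: "det (mat2 a b c d) = a*d - b*c"
  by (simp add: det_2)

lemma trace_mat2 [simp]: "trace (mat2 a b c d) = a + d"
  by (simp add: trace_def sum_2)

lemma mat1_eq_mat2: "(mat 1 :: cmat2) = mat2 1 0 0 1"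
  by (simp add: mat2_def mat_def vec_eq_iff forall_2)

lemma zero_eq_mat2: "(0 :: cmat2) = mat2 0 0 0 0"
  by (simp add: mat2_def vec_eq_iff forall_2)

lemma csmult_mult_left: "csmult c X ** Y = csmult c (X ** Y)"
  by (cases X rule: mat2_cases, cases Y rule: mat2_cases) (simp add: algebra_simps)

lemma csmult_mult_right: "X ** csmult c Y = csmult c (X ** Y)"
  by (cases X rule: mat2_cases, cases Y rule: mat2_cases) (simp add: algebra_simps)

lemma csmult_csmult: "csmult c (csmult d X) = csmult (c * d) X"
  by (cases X rule: mat2_cases) (simp add: algebra_simps)

lemma csmult_one: "csmult 1 X = X"
  by (cases X rule: mat2_cases) simp

lemma csmult_add: "csmult c (X + Y) = csmult c X + csmult c Y"
  by (cases X rule: mat2_cases, cases Y rule: mat2_cases) (simp add: algebra_simps)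

lemma adj_csmult: "adj (csmult c X) = csmult (cnj c) (adj X)"
  by (cases X rule: mat2_cases) simp

lemma adj_mult: "adj (X ** Y) = adj Y ** adj X"
  by (cases X rule: mat2_cases, cases Y rule: mat2_cases) (simp add: algebra_simps)

lemma adj_add: "adj (X + Y) = adj X + adj Y"
  by (cases X rule: mat2_cases, cases Y rule: mat2_cases) simp

lemma adj_adj: "adj (adj X) = X"
  by (cases X rule: mat2_cases) simp

lemma adj_mat1: "adj (mat 1) = (mat 1 :: cmat2)"
  by (simp add: mat1_eq_mat2)

lemma det_adj: "det (adj X) = cnj (det X)"
  by (cases X rule: mat2_cases) simp

lemma det_csmult: "det (csmult c X) = c^2 * det X"
  by (cases X rule: mat2_cases) (simp add: algebra_simps power2_eq_square)

lemma trace_csmult: "trace (csmult c X) = c * trace X"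
  by (cases X rule: mat2_cases) (simp add: algebra_simps)

lemma cofm_mult_self: "cofm X ** X = csmult (det X) (mat 1)"
  by (cases X rule: mat2_cases) (simp add: algebra_simps mat1_eq_mat2)

lemma csmult_affine_mult: "(csmult a X + csmult b (mat 1)) ** Y = csmult a (X ** Y) + csmult b Y"
  by (cases X rule: mat2_cases, cases Y rule: mat2_cases) (simp add: mat1_eq_mat2 algebra_simps)

lemma cayley_hamilton2: "M ** M + csmult (det M) (mat 1) = csmult (trace M) M"
  by (cases M rule: mat2_cases) (simp add: algebra_simps mat1_eq_mat2)

section \<open>Unitary and Hermitian matrices\<close>

lemma unitary2_right: "unitary2 U \<Longrightarrow> U ** adj U = mat 1"
  unfolding unitary2_def using matrix_left_right_inverse by blast

lemma unitary2_cnj_det_mult_det: "unitary2 U \<Longrightarrow> cnj (det U) * det U = 1"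
  by (metis unitary2_def det_mul det_adj det_I)

lemma trace_unitary_conj: "unitary2 V \<Longrightarrow> trace (V ** D ** adj V) = trace D"
  by (metis trace_mul_sym matrix_mul_assoc matrix_mul_lid unitary2_def)

lemma det_unitary_conj: "unitary2 V \<Longrightarrow> det (V ** D ** adj V) = det D"
  using unitary2_cnj_det_mult_det[of V] by (simp add: det_mul det_adj algebra_simps)

lemma unitary_conj_affine:
  assumes "unitary2 V"
  shows "V ** (csmult g D + csmult k (mat 1)) ** adj V = csmult g (V ** D ** adj V) + csmult k (mat 1)"
proof -
  have "V ** (csmult g D + csmult k (mat 1)) ** adj V = csmult g (V ** D ** adj V) + csmult k (V ** adj V)"
    by (cases V rule: mat2_cases, cases D rule: mat2_cases) (simp add: mat1_eq_mat2 algebra_simps)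
  then show ?thesis using unitary2_right[OF assms] by simp
qed

lemma hermitian2_cases:
  assumes "adj P = P"
  obtains a d :: real and b where "P = mat2 (of_real a) b (cnj b) (of_real d)"
proof -
  obtain p b c q where P: "P = mat2 p b c q" by (rule mat2_cases)
  with assms have "p \<in> \<real>" "c = cnj b" "q \<in> \<real>" by (auto simp: Reals_cnj_iff)
  with P show thesis by (metis that of_real_Re)
qed

lemma posdef2_det_trace:
  assumes "posdef2 P"
  obtains D \<tau> :: real where "0 < D" "det P = of_real D" "0 < \<tau>" "trace P = of_real \<tau>"
proof -
  have "adj P = P"
    using assms by (simp add: posdef2_def)
  then obtain a d b where P: "P = mat2 (of_real a) b (cnj b) (of_real d)"
    by (rule hermitian2_cases)
  have form: "0 < Re (\<Sum>i\<in>UNIV. cnj (x$i) * (P *v x)$i)" if "x \<noteq> 0" for x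
    using assms that unfolding posdef2_def by blast
  have bb: "b * cnj b = of_real ((cmod b)^2)"
    by (rule complex_norm_square[symmetric])
  \<comment> \<open>evaluate the form at \<open>(1, 0)\<close> and at \<open>(- b, a)\<close>\<close>
  have "vector [1, 0] \<noteq> (0 :: complex^2)"
    by (metis vector_2(1) zero_index one_neq_zero)
  from form[OF this] have a: "0 < a"
    by (simp add: P sum_2)
  have "vector [- b, of_real a] \<noteq> (0 :: complex^2)"
    using a by (metis vector_2(2) zero_index of_real_eq_0_iff less_irrefl)
  from form[OF this] have "0 < a * (a * d - (cmod b)^2)"
    by (simp add: P sum_2 algebra_simps bb)
  then have D: "0 < a * d - (cmod b)^2"
    using a by (simp add: zero_less_mult_iff)
  then have "0 < a * d"
    using zero_le_power2[of "cmod b"] by linarith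
  then have "0 < a + d"
    using a by (simp add: zero_less_mult_iff)
  moreover have "det P = of_real (a * d - (cmod b)^2)"
    by (simp add: P bb)
  moreover have "trace P = of_real (a + d)"
    by (simp add: P)
  ultimately show thesis using that D by blast
qed

section \<open>Polar decomposition of a matrix of determinant one\<close>

definition frob_sq :: "cmat2 \<Rightarrow> real" where
  "frob_sq M = (cmod (M$1$1))^2 + (cmod (M$1$2))^2 + (cmod (M$2$1))^2 + (cmod (M$2$2))^2"

lemma of_real_frob_sq_mat2:
  "of_real (frob_sq (mat2 p q r w)) = p * cnj p + q * cnj q + r * cnj r + w * cnj w"
  unfolding frob_sq_def of_real_add by (simp only: mat2_nth complex_norm_square)

lemma frob_sq_csmult: "frob_sq (csmult c M) = (cmod c)^2 * frob_sq M"
  by (simp add: frob_sq_def csmult_def norm_mult power_mult_distrib algebra_simps)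

lemma frob_sq_nonneg: "0 \<le> frob_sq M"
  by (simp add: frob_sq_def)

lemma frob_sq_pos: "M \<noteq> 0 \<Longrightarrow> 0 < frob_sq M"
  by (cases M rule: mat2_cases) (auto simp: frob_sq_def zero_eq_mat2 add_pos_nonneg add_nonneg_pos)

lemma two_cmod_det_le_frob_sq: "2 * cmod (det M) \<le> frob_sq M"
proof (cases M rule: mat2_cases)
  case (1 p q r w)
  have "cmod (det M) \<le> cmod p * cmod w + cmod q * cmod r"
    using norm_triangle_ineq4[of "p*w" "q*r"] by (simp add: 1 norm_mult)
  moreover have "0 \<le> (cmod p - cmod w)^2 + (cmod q - cmod r)^2"
    by simp
  ultimately show ?thesis
    by (simp add: 1 frob_sq_def power2_eq_square algebra_simps)
qed

lemma trace_mat1: "trace (mat 1 :: cmat2) = 2"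
  by (simp add: mat1_eq_mat2)

lemma trace_mult_adj: "trace (M ** adj M) = of_real (frob_sq M)"
  by (cases M rule: mat2_cases) (simp add: of_real_frob_sq_mat2 algebra_simps)

definition cof_adj :: "cmat2 \<Rightarrow> cmat2" where
  "cof_adj M = adj (cofm M)"

lemma cof_adj_mat2 [simp]: "cof_adj (mat2 a b c d) = mat2 (cnj d) (- cnj c) (- cnj b) (cnj a)"
  by (simp add: cof_adj_def)

lemma cof_adj_csmult: "cof_adj (csmult c M) = csmult (cnj c) (cof_adj M)"
  by (cases M rule: mat2_cases) simp

definition polar_scale :: "cmat2 \<Rightarrow> real" where
  "polar_scale M = sqrt (frob_sq M + 2)"

definition polar_pos :: "cmat2 \<Rightarrow> cmat2" where
  "polar_pos M = csmult (of_real (1 / polar_scale M)) (M ** adj M + mat 1)"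

definition polar_unitary :: "cmat2 \<Rightarrow> cmat2" where
  "polar_unitary M = csmult (of_real (1 / polar_scale M)) (M + cof_adj M)"

lemma polar_scale_pos: "0 < polar_scale M"
  using frob_sq_nonneg[of M] by (simp add: polar_scale_def)

lemma polar_scale_sq: "(polar_scale M)^2 = frob_sq M + 2"
  using frob_sq_nonneg[of M] by (simp add: polar_scale_def)

lemma polar_scale_normalize:
  "of_real (1 / polar_scale M) * (of_real (1 / polar_scale M) * of_real (frob_sq M + 2)) = (1 :: complex)"
proof -
  have "1 / polar_scale M * (1 / polar_scale M * (frob_sq M + 2)) = 1"
    using polar_scale_pos[of M] by (simp flip: polar_scale_sq add: power2_eq_square)
  then show ?thesis
    by (metis of_real_1 of_real_mult)
qed

lemma mult_adj_plus_one_mult_polar: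
  assumes "det M = 1"
  shows "(M ** adj M + mat 1) ** (M + cof_adj M) = csmult (of_real (frob_sq M + 2)) M"
proof (cases M rule: mat2_cases)
  case (1 p q r w)
  have d: "p*w - q*r = 1" using assms 1 by simp
  have d': "cnj p * cnj w - cnj q * cnj r = 1"
    using arg_cong[OF d, of cnj] by simp
  show ?thesis
    using d d' of_real_frob_sq_mat2[of p q r w]
    by (simp add: 1 mat1_eq_mat2) (intro conjI; algebra)
qed

lemma adj_mult_self_polar:
  assumes "det M = 1"
  shows "adj (M + cof_adj M) ** (M + cof_adj M) = csmult (of_real (frob_sq M + 2)) (mat 1)"
proof (cases M rule: mat2_cases)
  case (1 p q r w)
  have d: "p*w - q*r = 1" using assms 1 by simp
  have d': "cnj p * cnj w - cnj q * cnj r = 1"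
    using arg_cong[OF d, of cnj] by simp
  show ?thesis
    using d d' of_real_frob_sq_mat2[of p q r w]
    by (simp add: 1 mat1_eq_mat2) (intro conjI, algebra, simp_all add: algebra_simps)
qed

lemma polar_factorization: "det M = 1 \<Longrightarrow> polar_pos M ** polar_unitary M = M"
  unfolding polar_pos_def polar_unitary_def csmult_mult_left csmult_mult_right
  by (simp only: mult_adj_plus_one_mult_polar csmult_csmult polar_scale_normalize csmult_one)

lemma unitary2_polar_unitary: "det M = 1 \<Longrightarrow> unitary2 (polar_unitary M)"
  unfolding unitary2_def polar_unitary_def adj_csmult complex_cnj_complex_of_real
    csmult_mult_left csmult_mult_right
  by (simp only: adj_mult_self_polar csmult_csmult polar_scale_normalize csmult_one)

lemma adj_polar_pos: "adj (polar_pos M) = polar_pos M"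
  by (simp add: polar_pos_def adj_csmult adj_add adj_mult adj_adj adj_mat1)

lemma trace_polar_pos: "trace (polar_pos M) = of_real (polar_scale M)"
proof -
  have "trace (polar_pos M) = of_real (1 / polar_scale M * (frob_sq M + 2))"
    by (simp add: polar_pos_def trace_csmult trace_add trace_mult_adj trace_mat1)
  also have "1 / polar_scale M * (frob_sq M + 2) = polar_scale M"
    using polar_scale_pos[of M] by (simp flip: polar_scale_sq add: power2_eq_square)
  finally show ?thesis .
qed

lemma posdef2_polar_pos: "posdef2 (polar_pos M)"
  unfolding posdef2_def
proof (intro conjI allI impI)
  show "adj (polar_pos M) = polar_pos M" by (rule adj_polar_pos)
  fix x :: "complex^2" assume "x \<noteq> 0"
  then have "x$1 \<noteq> 0 \<or> x$2 \<noteq> 0"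
    by (auto simp: vec_eq_iff forall_2)
  then have x: "0 < (cmod (x$1))^2 + (cmod (x$2))^2"
    by (auto intro: add_pos_nonneg add_nonneg_pos)
  obtain p q r w where M: "M = mat2 p q r w" by (rule mat2_cases)
  define y1 y2 where "y1 = cnj p * x$1 + cnj r * x$2" and "y2 = cnj q * x$1 + cnj w * x$2"
  \<comment> \<open>the form equals \<open>(\<parallel>adj M *v x\<parallel>\<^sup>2 + \<parallel>x\<parallel>\<^sup>2) / polar_scale M\<close>\<close>
  have "(\<Sum>i\<in>UNIV. cnj (x$i) * (polar_pos M *v x)$i) = of_real (1 / polar_scale M) *
      (y1 * cnj y1 + y2 * cnj y2 + x$1 * cnj (x$1) + x$2 * cnj (x$2))"
    unfolding polar_pos_def M sum_2 y1_def y2_def by (simp add: mat1_eq_mat2) algebra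
  also have "\<dots> = of_real (1 / polar_scale M *
      ((cmod y1)^2 + (cmod y2)^2 + ((cmod (x$1))^2 + (cmod (x$2))^2)))"
    by (simp only: of_real_mult of_real_add complex_norm_square add.assoc)
  finally have "Re (\<Sum>i\<in>UNIV. cnj (x$i) * (polar_pos M *v x)$i) = 1 / polar_scale M *
      ((cmod y1)^2 + (cmod y2)^2 + ((cmod (x$1))^2 + (cmod (x$2))^2))"
    by simp
  also have "0 < \<dots>"
    using polar_scale_pos[of M] by (intro mult_pos_pos add_nonneg_pos[OF _ x]) simp_all
  finally show "0 < Re (\<Sum>i\<in>UNIV. cnj (x$i) * (polar_pos M *v x)$i)" .
qed

lemma mult_adj_polar_factors:
  assumes "adj P = P" "unitary2 U"
  shows "(P ** U) ** adj (P ** U) = P ** P"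
  using unitary2_right[OF assms(2)]
  by (simp add: adj_mult assms(1) matrix_mul_assoc) (metis matrix_mul_assoc matrix_mul_rid)

lemma det_posdef_factor:
  assumes "det M = 1" "posdef2 P" "unitary2 U" "M = P ** U"
  shows "det P = 1"
proof -
  obtain D where D: "0 < D" "det P = of_real D"
    using posdef2_det_trace[OF assms(2)] by blast
  have "det (P ** P) = det (M ** adj M)"
    using mult_adj_polar_factors[of P U] assms by (simp add: posdef2_def)
  then have "of_real (D * D) = (1 :: complex)"
    using assms(1) D(2) by (simp add: det_mul det_adj)
  then have "D * D = 1"
    using of_real_eq_1_iff by blast
  with D show ?thesis
    by (metis mult_cancel_right1 mult_less_cancel_left_pos mult_less_cancel_right_pos
        not_less_iff_gr_or_eq of_real_1)
qed

lemma det_polar_pos: "det M = 1 \<Longrightarrow> det (polar_pos M) = 1"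
  by (metis det_posdef_factor polar_factorization posdef2_polar_pos unitary2_polar_unitary)

lemma polar_unique:
  assumes "det M = 1" "posdef2 P" "unitary2 U" "M = P ** U"
  shows "P = polar_pos M \<and> U = polar_unitary M"
proof -
  have det: "det P = 1"
    by (rule det_posdef_factor[OF assms])
  obtain \<tau> where \<tau>: "0 < \<tau>" "trace P = of_real \<tau>"
    using posdef2_det_trace[OF assms(2)] by blast
  have "P ** P = M ** adj M"
    using mult_adj_polar_factors[of P U] assms by (simp add: posdef2_def)
  \<comment> \<open>Cayley--Hamilton, using \<open>det P = 1\<close>\<close>
  then have CH: "M ** adj M + mat 1 = csmult (of_real \<tau>) P"
    using cayley_hamilton2[of P] det \<tau>(2) by (simp add: csmult_one)
  have "of_real (frob_sq M + 2) = trace (M ** adj M + mat 1)"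
    by (simp add: trace_add trace_mult_adj trace_mat1)
  also have "\<dots> = of_real (\<tau> * \<tau>)"
    using \<tau>(2) by (simp add: CH trace_csmult)
  finally have "of_real (frob_sq M + 2) = (of_real (\<tau> * \<tau>) :: complex)" .
  then have "\<tau>^2 = (polar_scale M)^2"
    unfolding polar_scale_sq of_real_eq_iff by (simp add: power2_eq_square)
  then have "\<tau> = polar_scale M"
    using \<tau>(1) polar_scale_pos[of M] by simp
  then have P: "P = polar_pos M"
    unfolding polar_pos_def CH csmult_csmult using \<tau>(1)
    by (simp add: csmult_one flip: of_real_mult)
  have inv: "cofm P ** P = mat 1"
    by (simp add: cofm_mult_self det csmult_one)
  have "U = cofm P ** M"
    by (metis assms(4) inv matrix_mul_assoc matrix_mul_lid)
  moreover have "polar_unitary M = cofm P ** M"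
    using polar_factorization[OF assms(1)] inv P by (metis matrix_mul_assoc matrix_mul_lid)
  ultimately show ?thesis
    using P by simp
qed

lemma polar_rep_eq:
  assumes "det M = 1"
  shows "polar_rep h M = pdpow (polar_pos M) h ** polar_unitary M"
  unfolding polar_rep_def
proof (rule some_equality)
  show "\<exists>P U. posdef2 P \<and> unitary2 U \<and> M = P ** U \<and> pdpow (polar_pos M) h ** polar_unitary M = pdpow P h ** U"
    using posdef2_polar_pos unitary2_polar_unitary[OF assms] polar_factorization[OF assms] by metis
next
  fix X assume "\<exists>P U. posdef2 P \<and> unitary2 U \<and> M = P ** U \<and> X = pdpow P h ** U"
  then show "X = pdpow (polar_pos M) h ** polar_unitary M"
    using polar_unique[OF assms] by metis
qed

section \<open>Powers of a positive matrix of determinant one\<close>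

abbreviation diag2 :: "real \<Rightarrow> real \<Rightarrow> cmat2" where
  "diag2 x y \<equiv> mat2 (of_real x) 0 0 (of_real y)"

lemma orthogonal_eigenbasis_diagonalizes:
  assumes W: "adj W ** W = diag2 (nx^2) (ny^2)" "0 < nx" "0 < ny"
    and PW: "P ** W = W ** diag2 x y"
  shows "\<exists>V. unitary2 V \<and> P = V ** diag2 x y ** adj V"
proof -
  define V where "V = W ** diag2 (1 / nx) (1 / ny)"
  have "adj V ** V = diag2 (1 / nx) (1 / ny) ** (adj W ** W) ** diag2 (1 / nx) (1 / ny)"
    by (simp add: V_def adj_mult matrix_mul_assoc)
  also have "\<dots> = mat 1"
    using W by (simp add: mat1_eq_mat2 power2_eq_square flip: of_real_mult)
  finally have V: "unitary2 V"
    by (simp add: unitary2_def)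
  have "P ** V = (P ** W) ** diag2 (1 / nx) (1 / ny)"
    by (simp add: V_def matrix_mul_assoc)
  also have "\<dots> = W ** (diag2 x y ** diag2 (1 / nx) (1 / ny))"
    by (simp add: PW flip: matrix_mul_assoc)
  also have "\<dots> = V ** diag2 x y"
    by (simp add: V_def mult.commute flip: matrix_mul_assoc)
  finally have "P ** V = V ** diag2 x y" .
  then have "P = V ** diag2 x y ** adj V"
    by (metis V matrix_mul_assoc matrix_mul_rid unitary2_right)
  with V show ?thesis
    by blast
qed

lemma hermitian2_eigenbasis:
  fixes a d x y :: real
  assumes b: "b \<noteq> 0" and sum: "x + y = a + d" and prod: "x * y = a * d - (cmod b)^2"
  shows "\<exists>V. unitary2 V \<and> mat2 (of_real a) b (cnj b) (of_real d) = V ** diag2 x y ** adj V"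
proof (rule orthogonal_eigenbasis_diagonalizes)
  define nx ny where "nx = sqrt ((cmod b)^2 + (x - a)^2)" and "ny = sqrt ((cmod b)^2 + (y - a)^2)"
  show "0 < nx" "0 < ny"
    using b by (simp_all add: nx_def ny_def add_pos_nonneg)
  have "cnj b * b = of_real ((cmod b)^2)"
    by (metis complex_norm_square mult.commute)
  then have lift: "cnj b * b + of_real u * of_real v = (of_real ((cmod b)^2 + u * v) :: complex)" for u v
    by simp
  have y: "y = a + d - x" and b2: "(cmod b)^2 = a * d - x * y"
    using sum prod by simp_all
  \<comment> \<open>the columns of the matrix are orthogonal eigenvectors for \<open>x\<close> and \<open>y\<close>\<close>
  have "(cmod b)^2 + (x - a) * (x - a) = nx^2" "(cmod b)^2 + (y - a) * (y - a) = ny^2"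
    by (simp_all add: nx_def ny_def power2_eq_square)
  moreover have "(cmod b)^2 + (x - a) * (y - a) = 0" "(cmod b)^2 + (y - a) * (x - a) = 0"
    unfolding b2 y by (simp_all add: algebra_simps)
  ultimately show "adj (mat2 b b (of_real (x - a)) (of_real (y - a))) **
      mat2 b b (of_real (x - a)) (of_real (y - a)) = diag2 (nx^2) (ny^2)"
    unfolding adj_mat2 complex_cnj_complex_of_real mat2_mult mat2_eq_iff lift by simp
  have eig: "(cmod b)^2 + d * (x - a) = (x - a) * x" "(cmod b)^2 + d * (y - a) = (y - a) * y"
    unfolding b2 y by (simp_all add: algebra_simps)
  show "mat2 (of_real a) b (cnj b) (of_real d) ** mat2 b b (of_real (x - a)) (of_real (y - a)) =
      mat2 b b (of_real (x - a)) (of_real (y - a)) ** diag2 x y"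
    unfolding mat2_mult mat2_eq_iff lift eig by (simp add: algebra_simps)
qed

lemma hermitian2_diagonalizable:
  assumes "adj P = P"
  obtains V x y where "unitary2 V" "P = V ** diag2 x y ** adj V"
proof -
  obtain a d b where P: "P = mat2 (of_real a) b (cnj b) (of_real d)"
    using hermitian2_cases[OF assms] by blast
  show thesis
  proof (cases "b = 0")
    case True
    have "unitary2 (mat 1)"
      by (simp add: unitary2_def adj_mat1)
    then show thesis
      using that[of "mat 1" a d] by (simp add: P True mat1_eq_mat2)
  next
    case False
    define r where "r = sqrt ((a - d)^2 + 4 * (cmod b)^2)"
    have "r^2 = (a - d)^2 + 4 * (cmod b)^2"
      by (simp add: r_def)
    then have "(a + d + r) / 2 * ((a + d - r) / 2) = a * d - (cmod b)^2"
      by (simp add: field_simps power2_eq_square)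
    moreover have "(a + d + r) / 2 + (a + d - r) / 2 = a + d"
      by (simp add: field_simps)
    ultimately show thesis
      using hermitian2_eigenbasis[OF False] that P by blast
  qed
qed

lemma unitary_conj_diag2_eigenvalues:
  assumes V: "unitary2 V" and P: "P = V ** diag2 x y ** adj V"
    and det: "det P = 1" and tr: "trace P = of_real (l + 1 / l)" and l: "0 < l"
  shows "(x = l \<and> y = 1 / l) \<or> (x = 1 / l \<and> y = l)"
proof -
  have "of_real (x + y) = (of_real (l + 1 / l) :: complex)"
    using tr trace_unitary_conj[OF V] P by simp
  then have sum: "x + y = l + 1 / l"
    using of_real_eq_iff by blast
  have "of_real (x * y) = (1 :: complex)"
    using det det_unitary_conj[OF V] P by simp
  then have prod: "x * y = 1"
    using of_real_eq_1_iff by blast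
  have "(x - l) * (x - 1 / l) = x * x - x * (l + 1 / l) + 1"
    using l by (simp add: field_simps)
  also have "\<dots> = x * x - x * (x + y) + 1"
    by (simp add: sum)
  also have "\<dots> = 0"
    by (simp add: algebra_simps prod)
  finally have "x = l \<or> x = 1 / l"
    by simp
  then show ?thesis
    using sum by auto
qed

text \<open>\<open>x \<mapsto> pow_slope l h * x + pow_offset l h\<close> is the affine function that agrees with
  \<open>x powr h\<close> at \<open>x = l\<close> and \<open>x = 1 / l\<close>, the eigenvalues of a positive matrix of
  determinant one, so that \<open>P\<^sup>h = pow_slope l h P + pow_offset l h I\<close>.\<close>

definition pow_slope :: "real \<Rightarrow> real \<Rightarrow> real" where
  "pow_slope l h = (if l = 1 then 0 else (l powr h - l powr (- h)) / (l - 1 / l))"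

definition pow_offset :: "real \<Rightarrow> real \<Rightarrow> real" where
  "pow_offset l h = (l powr h + l powr (- h) - pow_slope l h * (l + 1 / l)) / 2"

lemma pow_slope_offset_interp:
  assumes "0 < l"
  shows "pow_slope l h * l + pow_offset l h = l powr h"
    and "pow_slope l h * (1 / l) + pow_offset l h = (1 / l) powr h"
proof -
  have inv: "(1 / l) powr h = l powr (- h)"
    using assms by (simp add: powr_minus_divide powr_divide)
  have "pow_slope l h * l - pow_slope l h * (1 / l) = l powr h - l powr (- h)"
  proof (cases "l = 1")
    case False
    have "l - 1 / l = (l - 1) * (l + 1) / l"
      using assms by (simp add: field_simps algebra_simps)
    then have "l - 1 / l \<noteq> 0"
      using assms False by simp
    then have "pow_slope l h * (l - 1 / l) = l powr h - l powr (- h)"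
      by (simp add: pow_slope_def False)
    then show ?thesis
      by (simp only: right_diff_distrib)
  qed simp
  then show "pow_slope l h * l + pow_offset l h = l powr h"
    and "pow_slope l h * (1 / l) + pow_offset l h = (1 / l) powr h"
    unfolding inv pow_offset_def distrib_left by argo+
qed

lemma unitary_conj_diag2_powr:
  assumes V: "unitary2 V" and P: "P = V ** diag2 x y ** adj V"
    and det: "det P = 1" and tr: "trace P = of_real (l + 1 / l)" and l: "0 < l"
  shows "V ** diag2 (x powr h) (y powr h) ** adj V =
    csmult (of_real (pow_slope l h)) P + csmult (of_real (pow_offset l h)) (mat 1)"
proof -
  have "diag2 (x powr h) (y powr h) =
      csmult (of_real (pow_slope l h)) (diag2 x y) + csmult (of_real (pow_offset l h)) (mat 1)"
    using unitary_conj_diag2_eigenvalues[OF assms] pow_slope_offset_interp[OF l, of h]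
    by (auto simp: mat1_eq_mat2 mult.commute simp flip: of_real_mult of_real_add)
  then show ?thesis
    by (simp only: unitary_conj_affine[OF V] P[symmetric])
qed

lemma pdpow_eq_affine:
  assumes herm: "adj P = P" and det: "det P = 1" and tr: "trace P = of_real (l + 1 / l)"
    and l: "0 < l"
  shows "pdpow P h = csmult (of_real (pow_slope l h)) P + csmult (of_real (pow_offset l h)) (mat 1)"
    (is "_ = ?Q")
proof -
  obtain V x y where V: "unitary2 V" "P = V ** diag2 x y ** adj V"
    using hermitian2_diagonalizable[OF herm] by blast
  then have "0 < x" "0 < y"
    using unitary_conj_diag2_eigenvalues[OF V det tr l] l by auto
  with V have "unitary2 V \<and> 0 < x \<and> 0 < y \<and> P = V ** diag2 x y ** adj V \<and>
      ?Q = V ** diag2 (x powr h) (y powr h) ** adj V"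
    using unitary_conj_diag2_powr[OF V det tr l, symmetric] by (intro conjI)
  then show ?thesis
    unfolding pdpow_def
  proof (intro the_equality exI)
    fix Q
    assume "\<exists>V l1 l2. unitary2 V \<and> 0 < l1 \<and> 0 < l2 \<and> P = V ** diag2 l1 l2 ** adj V \<and>
        Q = V ** diag2 (l1 powr h) (l2 powr h) ** adj V"
    then obtain W x' y' where W: "unitary2 W" "P = W ** diag2 x' y' ** adj W"
      and Q: "Q = W ** diag2 (x' powr h) (y' powr h) ** adj W"
      by blast
    show "Q = ?Q"
      unfolding Q by (rule unitary_conj_diag2_powr[OF W det tr l])
  qed
qed

text \<open>The larger eigenvalue of \<open>polar_pos M\<close> as a function of \<open>s = frob_sq M\<close>.\<close>

definition polar_eig :: "real \<Rightarrow> real" where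
  "polar_eig s = (sqrt (s + 2) + sqrt (s - 2)) / 2"

lemma polar_eig_ge_1_add_inverse:
  assumes "2 \<le> s"
  shows "1 \<le> polar_eig s" and "polar_eig s + 1 / polar_eig s = sqrt (s + 2)"
proof -
  define u v where "u = sqrt (s + 2)" and "v = sqrt (s - 2)"
  have u: "2 \<le> u" and v: "0 \<le> v"
    using real_le_rsqrt[of 2 "s + 2"] assms by (simp_all add: u_def v_def)
  have l: "polar_eig s = (u + v) / 2"
    by (simp add: polar_eig_def u_def v_def)
  show "1 \<le> polar_eig s"
    using u v by (simp add: l)
  have "(u + v) * (u - v) = u * u - v * v"
    by (simp add: algebra_simps)
  also have "\<dots> = 4"
    using assms by (simp add: u_def v_def)
  finally have inv: "1 / polar_eig s = (u - v) / 2"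
    using u v by (simp add: l field_simps)
  have "polar_eig s + 1 / polar_eig s = (u + v) / 2 + (u - v) / 2"
    unfolding inv by (simp only: l)
  then show "polar_eig s + 1 / polar_eig s = sqrt (s + 2)"
    by (simp add: u_def field_simps)
qed

lemma polar_eig_sq_bounds:
  assumes "2 \<le> s"
  shows "s / 2 \<le> (polar_eig s)^2" and "(polar_eig s)^2 \<le> s"
proof -
  define u v where "u = sqrt (s + 2)" and "v = sqrt (s - 2)"
  have u2: "u * u = s + 2" and v2: "v * v = s - 2" and "0 \<le> u" "0 \<le> v"
    using assms by (simp_all add: u_def v_def)
  have "(polar_eig s)^2 = (u * u + v * v + 2 * (u * v)) / 4"
    by (simp add: polar_eig_def u_def v_def power2_eq_square field_simps)
  then have sq: "(polar_eig s)^2 = (s + u * v) / 2"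
    by (simp add: u2 v2)
  have "(u * v)^2 = (u * u) * (v * v)"
    by (simp add: power2_eq_square mult_ac)
  also have "\<dots> = (s + 2) * (s - 2)"
    by (simp only: u2 v2)
  also have "\<dots> \<le> s^2"
    by (simp add: power2_eq_square algebra_simps)
  finally have "u * v \<le> s"
    by (rule power2_le_imp_le) (use assms in simp)
  with \<open>0 \<le> u\<close> \<open>0 \<le> v\<close> show "s / 2 \<le> (polar_eig s)^2" "(polar_eig s)^2 \<le> s"
    by (simp_all add: sq)
qed

lemma pdpow_polar_pos:
  assumes "det M = 1"
  shows "pdpow (polar_pos M) h =
    csmult (of_real (pow_slope (polar_eig (frob_sq M)) h)) (polar_pos M) +
    csmult (of_real (pow_offset (polar_eig (frob_sq M)) h)) (mat 1)"
proof -
  have s: "2 \<le> frob_sq M"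
    using two_cmod_det_le_frob_sq[of M] assms by simp
  have "0 < polar_eig (frob_sq M)"
    using polar_eig_ge_1_add_inverse(1)[OF s] by simp
  moreover have "polar_eig (frob_sq M) + 1 / polar_eig (frob_sq M) = polar_scale M"
    using polar_eig_ge_1_add_inverse(2)[OF s] by (simp add: polar_scale_def)
  ultimately show ?thesis
    using pdpow_eq_affine adj_polar_pos det_polar_pos[OF assms] trace_polar_pos by metis
qed

section \<open>An explicit representative of the image under \<open>Rtilde\<close>\<close>

definition scaled_polar_rep :: "real \<Rightarrow> cmat2 \<Rightarrow> cmat2" where
  "scaled_polar_rep h M =
    csmult (of_real (polar_scale M * pow_slope (polar_eig (frob_sq M)) h)) M +
    csmult (of_real (pow_offset (polar_eig (frob_sq M)) h)) (M + cof_adj M)"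

lemma scaled_polar_rep_eq:
  assumes "det M = 1"
  shows "scaled_polar_rep h M = csmult (of_real (polar_scale M)) (polar_rep h M)"
proof -
  define a b where "a = pow_slope (polar_eig (frob_sq M)) h" and "b = pow_offset (polar_eig (frob_sq M)) h"
  have "polar_rep h M = (csmult (of_real a) (polar_pos M) + csmult (of_real b) (mat 1)) ** polar_unitary M"
    by (simp add: polar_rep_eq[OF assms] pdpow_polar_pos[OF assms] a_def b_def)
  also have "\<dots> = csmult (of_real a) M + csmult (of_real b) (polar_unitary M)"
    by (simp add: csmult_affine_mult polar_factorization[OF assms])
  finally have "csmult (of_real (polar_scale M)) (polar_rep h M) =
      csmult (of_real (polar_scale M * a)) M + csmult (of_real b) (csmult (of_real (polar_scale M)) (polar_unitary M))"
    by (simp add: csmult_add csmult_csmult mult.commute)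
  also have "csmult (of_real (polar_scale M)) (polar_unitary M) = M + cof_adj M"
    using polar_scale_pos[of M] by (simp add: polar_unitary_def csmult_csmult csmult_one flip: of_real_mult)
  finally show ?thesis
    by (simp add: scaled_polar_rep_def a_def b_def)
qed

lemma scaled_polar_rep_uminus:
  "scaled_polar_rep h (csmult (-1) M) = csmult (-1) (scaled_polar_rep h M)"
  by (simp add: scaled_polar_rep_def polar_scale_def frob_sq_csmult cof_adj_csmult csmult_add
      csmult_csmult mult.commute)

lemma pclass_self: "M \<in> pclass M"
  unfolding pclass_def by (rule CollectI, rule exI[of _ 1]) (simp add: csmult_one)

lemma pclass_det1_cases:
  assumes "det A = 1" "det A' = 1" "pclass A = pclass A'"
  shows "A = A' \<or> A = csmult (-1) A'"
proof -
  have "A \<in> pclass A'"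
    using pclass_self[of A] assms(3) by simp
  then obtain c where "A = csmult c A'"
    unfolding pclass_def by blast
  moreover from this have "c^2 = 1"
    using assms(1,2) by (simp add: det_csmult)
  then have "c = 1 \<or> c = -1"
    by (simp add: power2_eq_1_iff)
  ultimately show ?thesis
    by (elim disjE) (simp_all add: csmult_one)
qed

lemma csmult_scaled_polar_rep_in_Rtilde:
  assumes "det A = 1" "c \<noteq> 0"
  shows "csmult c (scaled_polar_rep h A) \<in> Rtilde h (pclass A)"
proof -
  define A' where "A' = (SOME A'. det A' = 1 \<and> pclass A = pclass A')"
  have A': "det A' = 1" "pclass A = pclass A'"
    using someI_ex[of "\<lambda>A'. det A' = 1 \<and> pclass A = pclass A'"] assms(1) unfolding A'_def by blast+
  obtain k where k: "k \<noteq> 0" "scaled_polar_rep h A = csmult k (polar_rep h A')"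
  proof (cases "A = A'")
    case True
    then show thesis
      using that[of "of_real (polar_scale A')"] scaled_polar_rep_eq[OF A'(1)] polar_scale_pos[of A'] by simp
  next
    case False
    then have "A = csmult (-1) A'"
      using pclass_det1_cases[OF assms(1) A'] by blast
    then show thesis
      using that[of "- of_real (polar_scale A')"] scaled_polar_rep_eq[OF A'(1)] polar_scale_pos[of A']
      by (simp add: scaled_polar_rep_uminus csmult_csmult)
  qed
  then have "csmult c (scaled_polar_rep h A) = csmult (c * k) (polar_rep h A')" and "c * k \<noteq> 0"
    using assms(2) by (simp_all add: csmult_csmult)
  then have "csmult c (scaled_polar_rep h A) \<in> pclass (polar_rep h A')"
    unfolding pclass_def by blast
  then show ?thesis
    unfolding Rtilde_def A'_def .
qed

section \<open>Asymptotics of the interpolation coefficients\<close>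

lemma sinh_mult_le:
  fixes h u :: real
  assumes h: "0 \<le> h" "h \<le> 1" and u: "0 \<le> u"
  shows "sinh (h * u) \<le> h * sinh u"
proof -
  define f where "f v = h * sinh v - sinh (h * v)" for v :: real
  have "f 0 \<le> f u"
  proof (rule DERIV_nonneg_imp_nondecreasing[OF u])
    fix v :: real assume v: "0 \<le> v" "v \<le> u"
    have "(f has_real_derivative h * cosh v - cosh (h * v) * h) (at v)"
      unfolding f_def by (auto intro!: derivative_eq_intros)
    moreover have "cosh (h * v) \<le> cosh v"
      using h v by (simp add: cosh_real_nonneg_le_iff mult_left_le_one_le)
    then have "0 \<le> h * cosh v - cosh (h * v) * h"
      using h by (simp add: algebra_simps mult_left_mono)
    ultimately show "\<exists>y. (f has_real_derivative y) (at v) \<and> 0 \<le> y"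
      by blast
  qed
  then show ?thesis
    by (simp add: f_def)
qed

lemma pow_slope_bounds:
  assumes l: "1 \<le> l" and h: "0 \<le> h" "h \<le> 1"
  shows "0 \<le> pow_slope l h" "pow_slope l h \<le> h"
proof -
  have "0 \<le> pow_slope l h \<and> pow_slope l h \<le> h"
  proof (cases "l = 1")
    case True
    then show ?thesis
      using h by (simp add: pow_slope_def)
  next
    case False
    define u where "u = ln l"
    have u: "0 < u"
      using l False by (simp add: u_def)
    have "l powr h - l powr (- h) = 2 * sinh (h * u)"
      using l by (simp add: u_def powr_def sinh_def exp_minus field_simps)
    moreover have "l - 1 / l = 2 * sinh u"
      using l by (simp add: u_def sinh_ln_real inverse_eq_divide)
    ultimately have "pow_slope l h = sinh (h * u) / sinh u"
      using False by (simp add: pow_slope_def)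
    moreover have "sinh (h * u) \<le> h * sinh u"
      using sinh_mult_le[OF h] u by simp
    ultimately show ?thesis
      using h u by (simp add: divide_le_eq)
  qed
  then show "0 \<le> pow_slope l h" "pow_slope l h \<le> h"
    by auto
qed

lemma tendsto_powr_exp:
  fixes l h :: "'a \<Rightarrow> real"
  assumes "\<forall>\<^sub>F x in F. 0 < l x" and "((\<lambda>x. h x * ln (l x)) \<longlongrightarrow> a) F"
  shows "((\<lambda>x. l x powr h x) \<longlongrightarrow> exp a) F"
proof -
  have "\<forall>\<^sub>F x in F. exp (h x * ln (l x)) = l x powr h x"
    using assms(1) by eventually_elim (simp add: powr_def)
  with tendsto_exp[OF assms(2)] show ?thesis
    by (rule Lim_transform_eventually)
qed

lemma scaled_pow_slope_tendsto_0:
  fixes l h :: "'a \<Rightarrow> real"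
  assumes "\<forall>\<^sub>F x in F. 1 \<le> l x \<and> 0 \<le> h x \<and> h x \<le> 1"
    and "((\<lambda>x. l x + 1 / l x) \<longlongrightarrow> c) F" and "(h \<longlongrightarrow> 0) F"
  shows "((\<lambda>x. pow_slope (l x) (h x) * (l x + 1 / l x)) \<longlongrightarrow> 0) F"
proof (rule tendsto_sandwich[of "\<lambda>_. 0" _ _ "\<lambda>x. h x * (l x + 1 / l x)"])
  have "\<forall>\<^sub>F x in F. 0 \<le> pow_slope (l x) (h x) * (l x + 1 / l x) \<and>
      pow_slope (l x) (h x) * (l x + 1 / l x) \<le> h x * (l x + 1 / l x)"
    using assms(1)
  proof eventually_elim
    case (elim x)
    then have "0 < l x + 1 / l x"
      by (simp add: add_pos_pos)
    with elim pow_slope_bounds[of "l x" "h x"] show ?case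
      by (simp add: mult_right_mono)
  qed
  then show "\<forall>\<^sub>F x in F. 0 \<le> pow_slope (l x) (h x) * (l x + 1 / l x)"
    and "\<forall>\<^sub>F x in F. pow_slope (l x) (h x) * (l x + 1 / l x) \<le> h x * (l x + 1 / l x)"
    by (auto elim: eventually_mono)
  show "((\<lambda>x. h x * (l x + 1 / l x)) \<longlongrightarrow> 0) F"
    using tendsto_mult[OF assms(3,2)] by simp
qed simp

lemma scaled_pow_slope_tendsto:
  fixes l h :: "'a \<Rightarrow> real"
  assumes l: "filterlim l at_top F" and pow: "((\<lambda>x. l x powr h x) \<longlongrightarrow> a) F" and "a \<noteq> 0"
  shows "((\<lambda>x. pow_slope (l x) (h x) * (l x + 1 / l x)) \<longlongrightarrow> a - 1 / a) F"
proof -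
  have "((\<lambda>x. (l x powr h x - inverse (l x powr h x)) *
      ((1 + inverse (l x) ^ 2) / (1 - inverse (l x) ^ 2))) \<longlongrightarrow>
      (a - inverse a) * ((1 + 0 ^ 2) / (1 - 0 ^ 2))) F"
    by (intro tendsto_intros pow tendsto_inverse_0_at_top[OF l] \<open>a \<noteq> 0\<close>) simp
  moreover have "\<forall>\<^sub>F x in F. 1 < l x"
    using l by (simp add: filterlim_at_top_dense)
  then have "\<forall>\<^sub>F x in F. (l x powr h x - inverse (l x powr h x)) *
      ((1 + inverse (l x) ^ 2) / (1 - inverse (l x) ^ 2)) = pow_slope (l x) (h x) * (l x + 1 / l x)"
  proof eventually_elim
    case (elim x)
    then have "l x + 1 / l x = l x * (1 + inverse (l x) ^ 2)"
      and "l x - 1 / l x = l x * (1 - inverse (l x) ^ 2)"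
      by (simp_all add: field_simps power2_eq_square)
    then have "(1 + inverse (l x) ^ 2) / (1 - inverse (l x) ^ 2) = (l x + 1 / l x) / (l x - 1 / l x)"
      using elim by simp
    with elim show ?case
      by (simp add: pow_slope_def powr_minus)
  qed
  ultimately show ?thesis
    by (simp add: Lim_transform_eventually inverse_eq_divide)
qed

lemma pow_offset_tendsto:
  fixes l h :: "'a \<Rightarrow> real"
  assumes pow: "((\<lambda>x. l x powr h x) \<longlongrightarrow> a) F" and "a \<noteq> 0"
    and slope: "((\<lambda>x. pow_slope (l x) (h x) * (l x + 1 / l x)) \<longlongrightarrow> a - 1 / a) F"
  shows "((\<lambda>x. pow_offset (l x) (h x)) \<longlongrightarrow> 1 / a) F"
proof -
  have "((\<lambda>x. (l x powr h x + inverse (l x powr h x) - pow_slope (l x) (h x) * (l x + 1 / l x)) / 2)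
      \<longlongrightarrow> (a + inverse a - (a - 1 / a)) / 2) F"
    by (intro tendsto_intros pow slope \<open>a \<noteq> 0\<close>) simp
  then show ?thesis
    by (simp add: pow_offset_def powr_minus inverse_eq_divide)
qed

lemma tendsto_inverse_ln_at_top: "((\<lambda>t::real. 1 / ln t) \<longlongrightarrow> 0) at_top"
  using tendsto_inverse_0_at_top[OF ln_at_top] by (simp add: inverse_eq_divide)

lemma eventually_inverse_ln_bounds: "\<forall>\<^sub>F t in at_top. 0 \<le> 1 / ln t \<and> 1 / ln (t::real) \<le> 1"
  using eventually_ge_at_top[of "exp 1"]
proof eventually_elim
  case (elim t)
  then have "0 < t"
    by (metis exp_gt_zero order.strict_trans2)
  with elim have "1 \<le> ln t"
    using ln_le_cancel_iff[of "exp 1" t] by simp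
  then show ?case
    by simp
qed

lemma ln_polar_eig_bounds:
  assumes t: "1 < t" and s: "s = t powr (2 * \<alpha>) * n" "2 \<le> s"
  shows "\<alpha> * ln t + (ln n - ln 2) / 2 \<le> ln (polar_eig s)"
    and "ln (polar_eig s) \<le> \<alpha> * ln t + ln n / 2"
proof -
  define l where "l = polar_eig s"
  have l: "1 \<le> l" "l\<^sup>2 \<le> s" "s / 2 \<le> l\<^sup>2"
    using polar_eig_ge_1_add_inverse(1)[OF s(2)] polar_eig_sq_bounds[OF s(2)] by (simp_all add: l_def)
  have "0 < t powr (2 * \<alpha>) * n"
    using s by simp
  then have "0 < n"
    using t by (simp add: zero_less_mult_iff)
  then have ln_s: "ln s = 2 * \<alpha> * ln t + ln n"
    using s t by (simp add: ln_mult ln_powr)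
  have "2 * ln l = ln (l\<^sup>2)"
    using l by (simp add: ln_realpow)
  moreover have "ln (s / 2) \<le> ln (l\<^sup>2)" "ln (l\<^sup>2) \<le> ln s"
    using l s(2) by (subst ln_le_cancel_iff; auto)+
  ultimately have "ln s - ln 2 \<le> 2 * ln l" "2 * ln l \<le> ln s"
    using s(2) by (simp_all add: ln_div)
  then show "\<alpha> * ln t + (ln n - ln 2) / 2 \<le> ln (polar_eig s)"
    and "ln (polar_eig s) \<le> \<alpha> * ln t + ln n / 2"
    unfolding l_def ln_s by argo+
qed

lemma ln_polar_eig_ratio_tendsto:
  fixes s n :: "real \<Rightarrow> real"
  assumes s: "\<forall>\<^sub>F t in at_top. s t = t powr (2 * \<alpha>) * n t \<and> 2 \<le> s t"
    and n: "(n \<longlongrightarrow> c) at_top" "0 < c"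
  shows "((\<lambda>t. ln (polar_eig (s t)) / ln t) \<longlongrightarrow> \<alpha>) at_top"
proof (rule tendsto_sandwich)
  have ln_n: "((\<lambda>t. ln (n t)) \<longlongrightarrow> ln c) at_top"
    using n by (intro tendsto_ln) auto
  show "((\<lambda>t. \<alpha> + (ln (n t) - ln 2) / 2 * (1 / ln t)) \<longlongrightarrow> \<alpha>) at_top"
    using tendsto_add[OF tendsto_const tendsto_mult[OF tendsto_divide[OF tendsto_diff[OF ln_n tendsto_const]
        tendsto_const] tendsto_inverse_ln_at_top]] by simp
  show "((\<lambda>t. \<alpha> + ln (n t) / 2 * (1 / ln t)) \<longlongrightarrow> \<alpha>) at_top"
    using tendsto_add[OF tendsto_const tendsto_mult[OF tendsto_divide[OF ln_n tendsto_const] tendsto_inverse_ln_at_top]]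
    by simp
  show "\<forall>\<^sub>F t in at_top. \<alpha> + (ln (n t) - ln 2) / 2 * (1 / ln t) \<le> ln (polar_eig (s t)) / ln t"
    using s eventually_gt_at_top[of 1]
  proof eventually_elim
    case (elim t)
    then have "0 < ln t"
      by simp
    then have "\<alpha> + (ln (n t) - ln 2) / 2 * (1 / ln t) = (\<alpha> * ln t + (ln (n t) - ln 2) / 2) / ln t"
      by (simp add: field_simps)
    also have "\<dots> \<le> ln (polar_eig (s t)) / ln t"
      using ln_polar_eig_bounds(1)[of t] elim \<open>0 < ln t\<close> by (intro divide_right_mono) auto
    finally show ?case .
  qed
  show "\<forall>\<^sub>F t in at_top. ln (polar_eig (s t)) / ln t \<le> \<alpha> + ln (n t) / 2 * (1 / ln t)"
    using s eventually_gt_at_top[of 1]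
  proof eventually_elim
    case (elim t)
    then have "0 < ln t"
      by simp
    have "ln (polar_eig (s t)) / ln t \<le> (\<alpha> * ln t + ln (n t) / 2) / ln t"
      using ln_polar_eig_bounds(2)[of t] elim \<open>0 < ln t\<close> by (intro divide_right_mono) auto
    also have "\<dots> = \<alpha> + ln (n t) / 2 * (1 / ln t)"
      using \<open>0 < ln t\<close> by (simp add: field_simps)
    finally show ?case .
  qed
qed

lemma filterlim_at_top_of_ln_ratio:
  fixes l :: "real \<Rightarrow> real"
  assumes "((\<lambda>t. ln (l t) / ln t) \<longlongrightarrow> \<alpha>) at_top" "0 < \<alpha>" "\<forall>\<^sub>F t in at_top. 0 < l t"
  shows "filterlim l at_top at_top"
proof -
  have "filterlim (\<lambda>t. ln (l t) / ln t * ln t) at_top at_top"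
    by (rule filterlim_tendsto_pos_mult_at_top[OF assms(1,2) ln_at_top])
  moreover have "\<forall>\<^sub>F t in at_top. ln (l t) / ln t * ln t = ln (l t)"
    using eventually_gt_at_top[of 1] by eventually_elim simp
  ultimately have "filterlim (\<lambda>t. ln (l t)) at_top at_top"
    by (simp add: filterlim_cong)
  then have "filterlim (\<lambda>t. exp (ln (l t))) at_top at_top"
    by (rule filterlim_compose[OF exp_at_top])
  moreover have "\<forall>\<^sub>F t in at_top. exp (ln (l t)) = l t"
    using assms(3) by eventually_elim simp
  ultimately show ?thesis
    by (simp add: filterlim_cong)
qed

lemma polar_coeff_tendsto:
  fixes s n :: "real \<Rightarrow> real"
  assumes \<alpha>: "0 \<le> \<alpha>" and s: "\<forall>\<^sub>F t in at_top. s t = t powr (2 * \<alpha>) * n t \<and> 2 \<le> s t"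
    and n: "(n \<longlongrightarrow> c) at_top" "0 < c"
  shows "((\<lambda>t. pow_slope (polar_eig (s t)) (1 / ln t) * sqrt (s t + 2)) \<longlongrightarrow> exp \<alpha> - exp (- \<alpha>)) at_top"
    and "((\<lambda>t. pow_offset (polar_eig (s t)) (1 / ln t)) \<longlongrightarrow> exp (- \<alpha>)) at_top"
proof -
  define l where "l t = polar_eig (s t)" for t
  have l: "\<forall>\<^sub>F t in at_top. 1 \<le> l t \<and> l t + 1 / l t = sqrt (s t + 2)"
    using s by eventually_elim (simp add: l_def polar_eig_ge_1_add_inverse)
  have ratio: "((\<lambda>t. ln (l t) / ln t) \<longlongrightarrow> \<alpha>) at_top"
    unfolding l_def by (rule ln_polar_eig_ratio_tendsto[OF s n])
  have pow: "((\<lambda>t. l t powr (1 / ln t)) \<longlongrightarrow> exp \<alpha>) at_top"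
    using l ratio by (intro tendsto_powr_exp) (auto elim: eventually_mono)
  have slope: "((\<lambda>t. pow_slope (l t) (1 / ln t) * (l t + 1 / l t)) \<longlongrightarrow> exp \<alpha> - 1 / exp \<alpha>) at_top"
  proof (cases "\<alpha> = 0")
    case True
    \<comment> \<open>\<open>l\<close> stays bounded, while the exponent \<open>1 / ln t\<close> tends to zero\<close>
    have "\<forall>\<^sub>F t in at_top. sqrt (n t + 2) = l t + 1 / l t"
      using l s eventually_gt_at_top[of 0] by eventually_elim (simp add: True)
    with tendsto_real_sqrt[OF tendsto_add[OF n(1) tendsto_const[of 2]]]
    have "((\<lambda>t. l t + 1 / l t) \<longlongrightarrow> sqrt (c + 2)) at_top"
      by (rule Lim_transform_eventually)
    moreover note tendsto_inverse_ln_at_top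
    moreover have "\<forall>\<^sub>F t in at_top. 1 \<le> l t \<and> 0 \<le> 1 / ln t \<and> 1 / ln t \<le> 1"
      using l eventually_inverse_ln_bounds by eventually_elim simp
    ultimately have "((\<lambda>t. pow_slope (l t) (1 / ln t) * (l t + 1 / l t)) \<longlongrightarrow> 0) at_top"
      by (intro scaled_pow_slope_tendsto_0)
    then show ?thesis
      using True by simp
  next
    case False
    with \<alpha> have "0 < \<alpha>"
      by simp
    have "filterlim l at_top at_top"
      using l by (intro filterlim_at_top_of_ln_ratio[OF ratio \<open>0 < \<alpha>\<close>]) (auto elim: eventually_mono)
    then show ?thesis
      by (rule scaled_pow_slope_tendsto[OF _ pow]) simp
  qed
  have "\<forall>\<^sub>F t in at_top. pow_slope (l t) (1 / ln t) * (l t + 1 / l t) =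
      pow_slope (polar_eig (s t)) (1 / ln t) * sqrt (s t + 2)"
    using l by eventually_elim (simp add: l_def)
  with slope show "((\<lambda>t. pow_slope (polar_eig (s t)) (1 / ln t) * sqrt (s t + 2)) \<longlongrightarrow> exp \<alpha> - exp (- \<alpha>)) at_top"
    by (simp add: Lim_transform_eventually exp_minus inverse_eq_divide)
  from pow_offset_tendsto[OF pow _ slope] show "((\<lambda>t. pow_offset (polar_eig (s t)) (1 / ln t)) \<longlongrightarrow> exp (- \<alpha>)) at_top"
    by (simp add: l_def exp_minus inverse_eq_divide)
qed

lemma tendsto_mat2:
  assumes "(a \<longlongrightarrow> a0) F" "(b \<longlongrightarrow> b0) F" "(c \<longlongrightarrow> c0) F" "(d \<longlongrightarrow> d0) F"
  shows "((\<lambda>t. mat2 (a t) (b t) (c t) (d t)) \<longlongrightarrow> mat2 a0 b0 c0 d0) F"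
proof (intro vec_tendstoI)
  fix i j :: 2
  show "((\<lambda>t. mat2 (a t) (b t) (c t) (d t) $ i $ j) \<longlongrightarrow> mat2 a0 b0 c0 d0 $ i $ j) F"
    using exhaust_2[of i] exhaust_2[of j] assms by auto
qed

lemma tendsto_csmult:
  assumes "(g \<longlongrightarrow> c) F" "(X \<longlongrightarrow> L) F"
  shows "((\<lambda>t. csmult (g t) (X t)) \<longlongrightarrow> csmult c L) F"
  unfolding csmult_def by (intro tendsto_vec_lambda tendsto_mult assms tendsto_vec_nth)

lemma tendsto_cof_adj:
  assumes "(X \<longlongrightarrow> L) F"
  shows "((\<lambda>t. cof_adj (X t)) \<longlongrightarrow> cof_adj L) F"
proof -
  have "cof_adj M = mat2 (cnj (M$2$2)) (- cnj (M$2$1)) (- cnj (M$1$2)) (cnj (M$1$1))" for M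
    by (subst mat2_eta[of M]) simp
  then show ?thesis
    by (simp only:) (intro tendsto_mat2 tendsto_cnj tendsto_minus tendsto_vec_nth assms)
qed

lemma tendsto_frob_sq:
  assumes "(X \<longlongrightarrow> L) F"
  shows "((\<lambda>t. frob_sq (X t)) \<longlongrightarrow> frob_sq L) F"
  unfolding frob_sq_def by (intro tendsto_add tendsto_power tendsto_norm tendsto_vec_nth assms)

lemma tendsto_det2:
  fixes X :: "'b \<Rightarrow> cmat2"
  assumes "(X \<longlongrightarrow> L) F"
  shows "((\<lambda>t. det (X t)) \<longlongrightarrow> det L) F"
  unfolding det_2 by (intro tendsto_diff tendsto_mult tendsto_vec_nth assms)

lemma convergent_powr_at_top:
  fixes a L :: real
  assumes lim: "((\<lambda>t. t powr (- a)) \<longlongrightarrow> L) at_top"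
  shows "0 \<le> a" and "L = (if a = 0 then 1 else 0)"
proof -
  show "0 \<le> a"
  proof (rule ccontr)
    assume "\<not> 0 \<le> a"
    then have "((\<lambda>t::real. t powr a) \<longlongrightarrow> 0) at_top"
      by (intro tendsto_neg_powr filterlim_ident) simp
    from tendsto_mult[OF this lim] have "((\<lambda>t. t powr a * t powr (- a)) \<longlongrightarrow> 0) at_top"
      by simp
    moreover have "\<forall>\<^sub>F t in at_top. t powr a * t powr (- a) = (1 :: real)"
      using eventually_gt_at_top[of 0] by eventually_elim (simp flip: powr_add)
    ultimately have "((\<lambda>t::real. 1 :: real) \<longlongrightarrow> 0) at_top"
      by (rule Lim_transform_eventually)
    then show False
      by (simp add: tendsto_const_iff)
  qed
  have "((\<lambda>t::real. t powr (- a)) \<longlongrightarrow> (if a = 0 then 1 else 0)) at_top"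
  proof (cases "a = 0")
    case True
    have "\<forall>\<^sub>F t in at_top. 1 = (t::real) powr (- a)"
      using eventually_gt_at_top[of 0] by eventually_elim (simp add: True)
    with tendsto_const[of "1 :: real"] have "((\<lambda>t::real. t powr (- a)) \<longlongrightarrow> 1) at_top"
      by (rule Lim_transform_eventually)
    with True show ?thesis
      by simp
  next
    case False
    with \<open>0 \<le> a\<close> show ?thesis
      by (simp, intro tendsto_neg_powr filterlim_ident) simp
  qed
  with lim show "L = (if a = 0 then 1 else 0)"
    by (rule tendsto_unique[OF trivial_limit_at_top_linorder])
qed

lemma normalized_det_limit:
  fixes A :: "real \<Rightarrow> cmat2"
  assumes det1: "\<forall>t>1. det (A t) = 1"
    and lim: "((\<lambda>t. csmult (of_real (t powr (- \<alpha>))) (A t)) \<longlongrightarrow> B) at_top"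
  shows "0 \<le> \<alpha>" and "det B = (if \<alpha> = 0 then 1 else 0)"
proof -
  have "\<forall>\<^sub>F t in at_top. det (csmult (of_real (t powr (- \<alpha>))) (A t)) = of_real (t powr (- (2 * \<alpha>)))"
    using eventually_gt_at_top[of 1]
  proof eventually_elim
    case (elim t)
    then have "(t powr (- \<alpha>))^2 = t powr (- (2 * \<alpha>))"
      by (simp add: power2_eq_square flip: powr_add)
    with elim det1 show ?case
      by (simp add: det_csmult flip: of_real_power)
  qed
  with tendsto_det2[OF lim] have lim_det: "((\<lambda>t. of_real (t powr (- (2 * \<alpha>)))) \<longlongrightarrow> det B) at_top"
    by (rule Lim_transform_eventually)
  from tendsto_Re[OF lim_det] have "((\<lambda>t. t powr (- (2 * \<alpha>))) \<longlongrightarrow> Re (det B)) at_top"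
    by simp
  note powr_lim = convergent_powr_at_top[OF this]
  from tendsto_Im[OF lim_det] have "Im (det B) = 0"
    by (simp add: tendsto_const_iff)
  with powr_lim show "0 \<le> \<alpha>" "det B = (if \<alpha> = 0 then 1 else 0)"
    by (simp_all add: complex_eq_iff)
qed

lemma det_affine_cof_adj:
  "det (csmult (of_real x) B + csmult (of_real y) (cof_adj B)) =
    of_real (x^2) * det B + of_real (x * y * frob_sq B) + of_real (y^2) * cnj (det B)"
proof (cases B rule: mat2_cases)
  case (1 p q r w)
  show ?thesis
    using of_real_frob_sq_mat2[of p q r w] by (simp add: 1 power2_eq_square algebra_simps)
qed

lemma det_exp_affine_cof_adj_nonzero:
  assumes "B \<noteq> 0" and "det B = (if \<alpha> = 0 then 1 else 0)"
  shows "det (csmult (of_real (exp \<alpha>)) B + csmult (of_real (exp (- \<alpha>))) (cof_adj B)) \<noteq> 0"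
proof -
  have "det (csmult (of_real (exp \<alpha>)) B + csmult (of_real (exp (- \<alpha>))) (cof_adj B)) =
      of_real ((exp \<alpha>)^2) * det B + of_real (exp \<alpha> * exp (- \<alpha>) * frob_sq B) +
      of_real ((exp (- \<alpha>))^2) * cnj (det B)"
    by (rule det_affine_cof_adj)
  also have "\<dots> = of_real (frob_sq B + (if \<alpha> = 0 then 2 else 0))"
    using assms(2) by (cases "\<alpha> = 0") (simp_all add: exp_minus_inverse)
  also have "\<dots> \<noteq> 0"
    using frob_sq_pos[OF assms(1)] by (simp only: of_real_eq_0_iff) simp
  finally show ?thesis .
qed

lemma scaled_polar_rep_tendsto:
  fixes A :: "real \<Rightarrow> cmat2"
  assumes det1: "\<forall>t>1. det (A t) = 1" and \<alpha>: "0 \<le> \<alpha>" and "B \<noteq> 0"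
    and lim: "((\<lambda>t. csmult (of_real (t powr (- \<alpha>))) (A t)) \<longlongrightarrow> B) at_top"
  shows "((\<lambda>t. csmult (of_real (t powr (- \<alpha>))) (scaled_polar_rep (1 / ln t) (A t))) \<longlongrightarrow>
      csmult (of_real (exp \<alpha>)) B + csmult (of_real (exp (- \<alpha>))) (cof_adj B)) at_top"
proof -
  define N where "N t = csmult (of_real (t powr (- \<alpha>))) (A t)" for t
  define s where "s t = frob_sq (A t)" for t
  have s: "\<forall>\<^sub>F t in at_top. s t = t powr (2 * \<alpha>) * frob_sq (N t) \<and> 2 \<le> s t"
    using eventually_gt_at_top[of 1]
  proof eventually_elim
    case (elim t)
    then have "t powr (2 * \<alpha>) * (t powr (- \<alpha>))^2 = 1"
      by (simp add: power2_eq_square flip: powr_add)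
    then have "s t = t powr (2 * \<alpha>) * frob_sq (N t)"
      by (simp add: N_def s_def frob_sq_csmult)
    moreover have "2 \<le> s t"
      using two_cmod_det_le_frob_sq[of "A t"] det1 elim by (simp add: s_def)
    ultimately show ?case ..
  qed
  have N: "(N \<longlongrightarrow> B) at_top"
    using lim by (simp add: N_def [abs_def])
  note coeff = polar_coeff_tendsto[OF \<alpha> s tendsto_frob_sq[OF N] frob_sq_pos[OF \<open>B \<noteq> 0\<close>]]
  have "((\<lambda>t. csmult (of_real (pow_slope (polar_eig (s t)) (1 / ln t) * sqrt (s t + 2))) (N t) +
      csmult (of_real (pow_offset (polar_eig (s t)) (1 / ln t))) (N t + cof_adj (N t))) \<longlongrightarrow>
      csmult (of_real (exp \<alpha> - exp (- \<alpha>))) B + csmult (of_real (exp (- \<alpha>))) (B + cof_adj B)) at_top"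
    by (intro tendsto_add tendsto_csmult tendsto_of_real tendsto_cof_adj coeff N)
  moreover have "csmult (of_real (exp \<alpha> - exp (- \<alpha>))) B + csmult (of_real (exp (- \<alpha>))) (B + cof_adj B) =
      csmult (of_real (exp \<alpha>)) B + csmult (of_real (exp (- \<alpha>))) (cof_adj B)"
    by (cases B rule: mat2_cases) (simp add: algebra_simps)
  moreover have "csmult (of_real (pow_slope (polar_eig (s t)) (1 / ln t) * sqrt (s t + 2))) (N t) +
      csmult (of_real (pow_offset (polar_eig (s t)) (1 / ln t))) (N t + cof_adj (N t)) =
      csmult (of_real (t powr (- \<alpha>))) (scaled_polar_rep (1 / ln t) (A t))" for t
    by (simp add: scaled_polar_rep_def N_def s_def polar_scale_def csmult_add csmult_csmult
        cof_adj_csmult mult_ac)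
  ultimately show ?thesis
    by simp
qed

theorem lemma3p1:
  fixes A :: "real \<Rightarrow> cmat2" and B :: cmat2 and \<alpha> :: real
  assumes "\<forall>t>1. det (A t) = 1"
    and "B \<noteq> 0"
    and "((\<lambda>t. csmult (of_real (t powr (- \<alpha>))) (A t)) \<longlongrightarrow> B) at_top"
  shows "pclass (csmult (of_real (exp \<alpha>)) B + csmult (of_real (exp (- \<alpha>))) (adj (cofm B))) \<in> PSL2 \<and>
    proj_tendsto (\<lambda>t. Rtilde (1 / ln t) (pclass (A t)))
      (pclass (csmult (of_real (exp \<alpha>)) B + csmult (of_real (exp (- \<alpha>))) (adj (cofm B)))) at_top"
proof -
  define T where "T = csmult (of_real (exp \<alpha>)) B + csmult (of_real (exp (- \<alpha>))) (adj (cofm B))"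
  define f where "f t = csmult (of_real (t powr (- \<alpha>))) (scaled_polar_rep (1 / ln t) (A t))" for t
  have \<alpha>: "0 \<le> \<alpha>" and det_B: "det B = (if \<alpha> = 0 then 1 else 0)"
    using normalized_det_limit[OF assms(1,3)] by blast+
  have "det T \<noteq> 0"
    using det_exp_affine_cof_adj_nonzero[OF assms(2) det_B] by (simp add: T_def cof_adj_def)
  then have "T \<noteq> 0" and "pclass T \<in> PSL2"
    unfolding PSL2_def by (auto simp: zero_eq_mat2)
  have "\<forall>\<^sub>F t in at_top. f t \<in> Rtilde (1 / ln t) (pclass (A t))"
    using eventually_gt_at_top[of 1]
  proof eventually_elim
    case (elim t)
    then show ?case
      unfolding f_def using assms(1) by (intro csmult_scaled_polar_rep_in_Rtilde) simp_all
  qed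
  moreover have "(f \<longlongrightarrow> T) at_top"
    using scaled_polar_rep_tendsto[OF assms(1) \<alpha> assms(2,3)] unfolding f_def T_def cof_adj_def .
  ultimately have "proj_tendsto (\<lambda>t. Rtilde (1 / ln t) (pclass (A t))) (pclass T) at_top"
    unfolding proj_tendsto_def using \<open>T \<noteq> 0\<close> by blast
  with \<open>pclass T \<in> PSL2\<close> show ?thesis
    unfolding T_def ..
qed

end
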